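(* Let $\mathcal A\subseteq 2^\Pi\setminus\{\emptyset\}$ be a symmetric adversary. Then $\mathit{setcon}(\mathcal A)=|\{k\in\{1,\dots,n\}:\exists S\in\mathcal A,\ |S|=k\}|$.
   Context: An adversary is a set $\mathcal A\subseteq 2^\Pi$ of subsets (live sets) of the process set $\Pi=\{p_1,\dots,p_n\}$. It is symmetric if for all $S\in\mathcal A$ and all $S'\subseteq\Pi$ with $|S'|=|S|$, $S'\in\mathcal A$. $\mathcal A|_P=\{S\in\mathcal A: S\subseteq P\}$. The set consensus power is defined recursively by $\mathit{setcon}(\emptyset)=0$ and, for $\mathcal A\ne\emptyset$, $\mathit{setcon}(\mathcal A)=\max_{S\in\mathcal A}\min_{a\in S}\mathit{setcon}(\mathcal A|_{S\setminus\{a\}})+1$. *)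

theory Defs
  imports Main
begin

definition symmetric_adv :: "'a set \<Rightarrow> 'a set set \<Rightarrow> bool" where
  "symmetric_adv Pi A \<longleftrightarrow>
     (\<forall>S\<in>A. \<forall>S'. S' \<subseteq> Pi \<and> card S' = card S \<longrightarrow> S' \<in> A)"

definition restr :: "'a set set \<Rightarrow> 'a set \<Rightarrow> 'a set set" where
  "restr A P = {S\<in>A. S \<subseteq> P}"

(* setcon with explicit recursion fuel; the fuel card (Union A) + 1 is always
   sufficient for finite adversaries, since every recursive call restricts to a
   strictly smaller union of live sets. *)
fun setcon_fuel :: "nat \<Rightarrow> 'a set set \<Rightarrow> nat" where
  "setcon_fuel 0 A = 0"
| "setcon_fuel (Suc k) A =
     (if A = {} then 0
      else Max ((\<lambda>S. Min ((\<lambda>a. setcon_fuel k (restr A (S - {a}))) ` S) + 1) ` A))"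

definition setcon :: "'a set set \<Rightarrow> nat" where
  "setcon A = setcon_fuel (Suc (card (\<Union>A))) A"

end

theory Submission
  imports Defs
begin

text \<open>By symmetry, restricting a symmetric adversary to a set P of processes keeps exactly the
  live-set sizes that are at most |P|, and removing any process from a live set S leaves an
  adversary whose sizes are those of A up to |S| - 1. Hence every choice of a in the recursion
  gives the same value, and by induction setcon of the restriction to P is the number of
  live-set sizes up to |P|: each live set S contributes that count for |S| - 1 plus one, which is
  the count for |S|, and the maximum is attained at a largest live set.\<close>

lemma restr_restr: "restr (restr A P) Q = restr A (P \<inter> Q)"
  by (auto simp: restr_def)

locale symmetric_adversary =
  fixes Pi :: "'a set" and A :: "'a set set"
  assumes finite_Pi: "finite Pi"
    and live_sets: "A \<subseteq> Pow Pi - {{}}"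
    and symmetric: "symmetric_adv Pi A"
begin

definition live_sizes :: "nat \<Rightarrow> nat set" where
  "live_sizes m = {j \<in> {1..m}. \<exists>S\<in>A. card S = j}"

lemma mono_card_live_sizes: "mono (\<lambda>m. card (live_sizes m))"
  unfolding live_sizes_def by (intro monoI card_mono) auto

lemma finite_live_set: "S \<in> A \<Longrightarrow> finite S"
  using live_sets finite_Pi finite_subset by blast

lemma card_live_set_pos: "S \<in> A \<Longrightarrow> card S > 0"
  using live_sets finite_live_set by (auto simp: card_gt_0_iff)

lemma finite_live_sizes: "finite (live_sizes m)"
  by (simp add: live_sizes_def)

lemma card_live_sizes_card_live_set:
  assumes "S \<in> A"
  shows "card (live_sizes (card S)) = Suc (card (live_sizes (card S - 1)))"
proof -
  have "live_sizes (card S) = insert (card S) (live_sizes (card S - 1))"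
    using assms card_live_set_pos[OF assms] by (auto simp: live_sizes_def)
  moreover have "card S \<notin> live_sizes (card S - 1)"
    using card_live_set_pos[OF assms] by (auto simp: live_sizes_def)
  ultimately show ?thesis by (simp add: finite_live_sizes)
qed

lemma finite_restr: "P \<subseteq> Pi \<Longrightarrow> finite (restr A P)"
  using finite_Pi by (auto simp: restr_def intro: finite_subset[of _ "Pow P"] finite_subset)

lemma live_sizes_card:
  assumes P: "P \<subseteq> Pi"
  shows "live_sizes (card P) = card ` restr A P"
proof (intro set_eqI iffI)
  fix j assume "j \<in> live_sizes (card P)"
  then obtain S where S: "S \<in> A" "card S = j" "j \<le> card P"
    by (auto simp: live_sizes_def)
  obtain T where T: "T \<subseteq> P" "card T = j"
    using obtain_subset_with_card_n[OF \<open>j \<le> card P\<close>] by metis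
  have "T \<in> A"
    using symmetric S T P unfolding symmetric_adv_def by (metis order_trans)
  with T show "j \<in> card ` restr A P" by (auto simp: restr_def)
next
  fix j assume "j \<in> card ` restr A P"
  then obtain S where S: "S \<in> A" "S \<subseteq> P" "card S = j" by (auto simp: restr_def)
  have "finite P" using P finite_Pi finite_subset by blast
  then have "j \<le> card P" using S card_mono by blast
  moreover have "j \<ge> 1" using S card_live_set_pos by fastforce
  ultimately show "j \<in> live_sizes (card P)" using S by (auto simp: live_sizes_def)
qed

lemma live_sizes_Max_card_restr:
  assumes P: "P \<subseteq> Pi" and nonempty: "restr A P \<noteq> {}"
  shows "live_sizes (card P) = live_sizes (Max (card ` restr A P))"
proof -
  let ?m = "Max (card ` restr A P)"
  have "?m \<in> live_sizes (card P)"
    using live_sizes_card[OF P] finite_restr[OF P] nonempty by simp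
  then have "?m \<le> card P" by (simp add: live_sizes_def)
  moreover have "\<forall>j\<in>live_sizes (card P). j \<le> ?m"
    using live_sizes_card[OF P] finite_restr[OF P] by simp
  ultimately show ?thesis by (auto simp: live_sizes_def)
qed

lemma setcon_fuel_restr:
  "P \<subseteq> Pi \<Longrightarrow> card P < k \<Longrightarrow> setcon_fuel k (restr A P) = card (live_sizes (card P))"
proof (induction k arbitrary: P)
  case 0
  then show ?case by simp
next
  case (Suc k)
  let ?R = "restr A P"
  show ?case
  proof (cases "?R = {}")
    case True
    then show ?thesis using live_sizes_card[OF Suc.prems(1)] by simp
  next
    case False
    have finite_P: "finite P" using Suc.prems(1) finite_Pi finite_subset by blast
    have value_at_live_set:
      "Min ((\<lambda>a. setcon_fuel k (restr ?R (S - {a}))) ` S) + 1 = card (live_sizes (card S))"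
      if S: "S \<in> ?R" for S
    proof -
      have SA: "S \<in> A" "S \<subseteq> P" using S by (auto simp: restr_def)
      have "setcon_fuel k (restr ?R (S - {a})) = card (live_sizes (card S - 1))" if "a \<in> S" for a
      proof -
        have "card S \<le> card P" using SA finite_P card_mono by blast
        then have "card (S - {a}) < k"
          using Suc.prems(2) \<open>a \<in> S\<close> card_live_set_pos[OF SA(1)] by simp
        moreover have "P \<inter> (S - {a}) = S - {a}" using SA by blast
        ultimately show ?thesis
          using Suc.IH[of "S - {a}"] Suc.prems(1) SA \<open>a \<in> S\<close> finite_live_set
          by (auto simp: restr_restr)
      qed
      moreover have "S \<noteq> {}" using SA live_sets by blast
      ultimately have "(\<lambda>a. setcon_fuel k (restr ?R (S - {a}))) ` S
                        = {card (live_sizes (card S - 1))}"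
        by auto
      then show ?thesis using card_live_sizes_card_live_set[OF SA(1)] by simp
    qed
    have "setcon_fuel (Suc k) ?R = Max ((\<lambda>m. card (live_sizes m)) ` card ` ?R)"
      using False value_at_live_set by (simp add: image_image cong: image_cong)
    also have "\<dots> = card (live_sizes (Max (card ` ?R)))"
      using mono_Max_commute[OF mono_card_live_sizes] finite_restr[OF Suc.prems(1)] False
      by simp
    also have "\<dots> = card (live_sizes (card P))"
      using live_sizes_Max_card_restr[OF Suc.prems(1) False] by simp
    finally show ?thesis .
  qed
qed

end

theorem mainTheorem8:
  fixes Pi :: "'a set" and A :: "'a set set"
  assumes "finite Pi"
    and "A \<subseteq> Pow Pi - {{}}"
    and "symmetric_adv Pi A"
  shows "setcon A = card {k \<in> {1..card Pi}. \<exists>S\<in>A. card S = k}"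
proof -
  interpret symmetric_adversary Pi A using assms by unfold_locales
  have union: "\<Union>A \<subseteq> Pi" and restr_union: "restr A (\<Union>A) = A" and restr_Pi: "restr A Pi = A"
    using assms(2) by (auto simp: restr_def)
  have "setcon A = card (live_sizes (card (\<Union>A)))"
    using setcon_fuel_restr[OF union, of "Suc (card (\<Union>A))"] restr_union
    by (simp add: setcon_def)
  also have "\<dots> = card (live_sizes (card Pi))"
    using live_sizes_card[OF union] live_sizes_card[OF order_refl] restr_union restr_Pi by simp
  finally show ?thesis by (simp add: live_sizes_def)
qed

end
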